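(* Let $n,d$ be positive integers. If $n\geq \frac{d^2}{2}$, then $d\in A_n$.
   Context: A walk is a finite sequence $z_0,z_1,\dots,z_l$ of Gaussian integers with $|z_{j+1}-z_j|=1$ for all $0\le j<l$. For natural numbers $n,d$, $n$ is called $d$-avoidable if there exists a walk $(z_j)$ and indices $r,s$ with $z_r-z_s=n$ such that $z_t-z_u\neq d$ for all indices $t,u$. $A_n$ denotes the set of all $d\in\mathbb{N}$ such that $n$ is not $d$-avoidable. *)

theory Defs
  imports Complex_Main
begin

definition gaussian_int :: "complex \<Rightarrow> bool" where
  "gaussian_int z \<longleftrightarrow> Re z \<in> \<int> \<and> Im z \<in> \<int>"

definition is_walk :: "complex list \<Rightarrow> bool" where
  "is_walk zs \<longleftrightarrow> zs \<noteq> [] \<and> (\<forall>z\<in>set zs. gaussian_int z) \<and>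
     (\<forall>j. Suc j < length zs \<longrightarrow> cmod (zs ! Suc j - zs ! j) = 1)"

definition avoidable :: "nat \<Rightarrow> nat \<Rightarrow> bool" where
  "avoidable n d \<longleftrightarrow> (\<exists>zs. is_walk zs \<and>
     (\<exists>r < length zs. \<exists>s < length zs. zs ! r - zs ! s = of_nat n) \<and>
     (\<forall>t < length zs. \<forall>u < length zs. zs ! t - zs ! u \<noteq> of_nat d))"

definition A :: "nat \<Rightarrow> nat set" where
  "A n = {d. 0 < d \<and> \<not> avoidable n d}"

end

theory Submission
  imports Defs "HOL-Complex_Analysis.Winding_Numbers"
begin

text \<open>
  The vertices of a walk span a connected polygonal trace, which contains an arc from the vertex
  \<open>z\<^sub>s\<close> to \<open>z\<^sub>r = z\<^sub>s + n\<close>. By the universal chord theorem such an arc contains a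
  horizontal chord of length \<open>c = n/k\<close> for every \<open>k \<ge> 1\<close>, and \<open>n \<ge> d\<^sup>2/2\<close> is exactly what
  makes some \<open>c\<close> lie strictly between \<open>d - 1\<close> and \<open>d + 1\<close>. The chord joins two points on
  unit lattice edges at the same height; rounding their real parts suitably picks one endpoint
  of each edge, and these two vertices differ by exactly \<open>d\<close>.

  For the chord theorem, take a shortest parameter interval \<open>[s, t]\<close> on which the arc gains a
  nonzero integer multiple \<open>j c\<close>. Minimality makes \<open>exp (2\<pi>i z / c)\<close> injective along the arc
  restricted to \<open>[s, t]\<close> apart from the endpoints, so the image is a simple closed curve with
  winding number \<open>j\<close> about 0; hence \<open>j = \<plusminus>1\<close>.
\<close>

lemma closed_nonzero_int_multiples:
  fixes c :: "'a::real_normed_div_algebra"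
  assumes "c \<noteq> 0"
  shows "closed {of_int j * c | j::int. j \<noteq> 0}"
proof (rule discrete_imp_closed[of "norm c"])
  show "0 < norm c" using assms by simp
  show "\<forall>x\<in>{of_int j * c | j::int. j \<noteq> 0}. \<forall>y\<in>{of_int j * c | j::int. j \<noteq> 0}.
          dist y x < norm c \<longrightarrow> y = x"
  proof (intro ballI impI)
    fix x y assume "x \<in> {of_int j * c | j::int. j \<noteq> 0}" "y \<in> {of_int j * c | j::int. j \<noteq> 0}"
      and close: "dist y x < norm c"
    then obtain i j :: int where x: "x = of_int i * c" and y: "y = of_int j * c" by blast
    have "dist y x = norm (of_int (j - i) * c)"
      by (simp add: x y dist_norm algebra_simps)
    also have "\<dots> = \<bar>of_int (j - i)\<bar> * norm c"
      by (simp only: norm_mult norm_of_int)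
    finally have "\<bar>real_of_int (j - i)\<bar> < 1" using close assms by simp
    then have "j = i"
      by linarith
    then show "y = x"
      using x y by simp
  qed
qed

lemma shortest_interval_with_increment_in:
  fixes g :: "real \<Rightarrow> 'a::real_normed_vector"
  assumes g: "continuous_on {0..1} g" and "closed L" "g 1 - g 0 \<in> L"
  obtains s t where "0 \<le> s" "s \<le> t" "t \<le> 1" "g t - g s \<in> L"
    "\<And>a b. 0 \<le> a \<Longrightarrow> a \<le> b \<Longrightarrow> b \<le> 1 \<Longrightarrow> g b - g a \<in> L \<Longrightarrow> t - s \<le> b - a"
proof -
  define S where "S = ({0..1} \<times> {0..1}) \<inter> {p::real \<times> real. fst p \<le> snd p}"
  define f where "f = (\<lambda>p::real \<times> real. g (snd p) - g (fst p))"
  define K where "K = S \<inter> f -` L"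
  have "closed S"
    unfolding S_def
    by (intro closed_Int closed_Times closed_atLeastAtMost) (intro closed_Collect_le continuous_intros)
  moreover have "continuous_on S f"
    unfolding f_def S_def
    by (intro continuous_intros continuous_on_compose2[OF g]) auto
  ultimately have "closed K"
    unfolding K_def using continuous_closed_preimage \<open>closed L\<close> by blast
  moreover have "K \<subseteq> {0..1} \<times> {0..1}"
    unfolding K_def S_def by auto
  ultimately have compact: "compact K"
    using compact_Int_closed[of "{0..1::real} \<times> {0..1::real}" K]
    by (metis compact_Icc compact_Times inf.absorb_iff2 inf_commute)
  have "(0, 1) \<in> K"
    using assms(3) unfolding K_def S_def f_def by simp
  then have "K \<noteq> {}"
    by blast
  moreover have "continuous_on K (\<lambda>p. snd p - fst p)"
    by (intro continuous_intros)
  ultimately obtain q where "q \<in> K" and "\<And>p. p \<in> K \<Longrightarrow> snd q - fst q \<le> snd p - fst p"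
    using continuous_attains_inf[OF compact] by blast
  then show thesis
    by (intro that[of "fst q" "snd q"]) (auto simp: K_def S_def f_def)
qed

lemma winding_number_bound_for_lattice_injective_path:
  fixes \<gamma> :: "real \<Rightarrow> complex" and c :: complex and j :: int
  assumes "path \<gamma>" "c \<noteq> 0" "\<gamma> 1 - \<gamma> 0 = of_int j * c"
    and lattice_inj: "\<And>x y m. x \<in> {0..1} \<Longrightarrow> y \<in> {0..1} \<Longrightarrow> \<gamma> x - \<gamma> y = of_int m * c
                        \<Longrightarrow> x = y \<or> x = 0 \<and> y = 1 \<or> x = 1 \<and> y = 0"
  shows "j \<in> {-1, 0, 1}"
proof -
  have two_pi_i_nonzero: "2 * of_real pi * \<i> \<noteq> (0 :: complex)"
    by simp
  define p where "p = (\<lambda>z. (2 * of_real pi * \<i> / c) * z) \<circ> \<gamma>"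
  define h where "h = exp \<circ> p"
  have "path p"
    unfolding p_def by (intro path_continuous_image assms(1) continuous_intros)
  have p_diff: "p x - p y = (2 * of_real pi * \<i> / c) * (\<gamma> x - \<gamma> y)" for x y
    by (simp add: p_def right_diff_distrib)
  have p_increment: "p 1 = p 0 + (2 * of_int j * pi) * \<i>"
    using p_diff[of 1 0] assms(2,3) by (simp add: algebra_simps)
  have winding: "winding_number h 0 = of_int j"
    using winding_number_compose_exp[OF \<open>path p\<close>] p_increment
    by (simp add: h_def pathfinish_def pathstart_def)
  have closed: "pathfinish h = pathstart h"
  proof -
    have "exp (p 1) = exp (p 0) * exp ((2 * of_int j * pi) * \<i>)"
      by (simp only: p_increment exp_add)
    also have "exp ((2 * of_int j * pi) * \<i>) = 1"
      by (rule exp_integer_2pi) simp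
    finally show ?thesis
      by (simp add: h_def pathfinish_def pathstart_def)
  qed
  have simple: "simple_path h"
    unfolding simple_path_def loop_free_def
  proof (intro conjI ballI impI)
    show "path h"
      unfolding h_def by (intro path_continuous_image \<open>path p\<close> continuous_intros)
    fix x y assume "x \<in> {0..1}" "y \<in> {0..1}" "h x = h y"
    then obtain m :: int where "p x = p y + (of_int (2 * m) * pi) * \<i>"
      using exp_eq unfolding h_def by auto
    then have "(2 * of_real pi * \<i>) * ((\<gamma> x - \<gamma> y) / c) = (2 * of_real pi * \<i>) * of_int m"
      using p_diff[of x y] by (simp add: algebra_simps)
    then have "(\<gamma> x - \<gamma> y) / c = of_int m"
      using mult_left_cancel[OF two_pi_i_nonzero] by blast
    then have "\<gamma> x - \<gamma> y = of_int m * c"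
      using assms(2) by (simp add: field_simps)
    then show "x = y \<or> x = 0 \<and> y = 1 \<or> x = 1 \<and> y = 0"
      using lattice_inj \<open>x \<in> {0..1}\<close> \<open>y \<in> {0..1}\<close> by blast
  qed
  have "0 \<notin> path_image h"
    by (auto simp: h_def path_image_def)
  from simple_closed_path_winding_number_cases[OF simple closed this]
  have "of_int j \<in> {of_int (-1), of_int 0, of_int 1 :: complex}"
    using winding by simp
  then show ?thesis
    by (simp only: insert_iff of_int_eq_iff empty_iff)
qed

lemma subpath_injective_modulo_multiples_of_shortest:
  fixes g :: "real \<Rightarrow> 'a::real_normed_algebra_1" and c :: 'a
  assumes "inj_on g {0..1}" "0 \<le> s" "s < t" "t \<le> 1"
    and shortest: "\<And>a b j. 0 \<le> a \<Longrightarrow> a \<le> b \<Longrightarrow> b \<le> 1 \<Longrightarrow> j \<noteq> 0 \<Longrightarrow>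
                     g b - g a = of_int j * c \<Longrightarrow> t - s \<le> b - a"
    and "x \<in> {0..1}" "y \<in> {0..1}" and chord: "subpath s t g x - subpath s t g y = of_int m * c"
  shows "x = y \<or> x = 0 \<and> y = 1 \<or> x = 1 \<and> y = 0"
proof -
  define x' where "x' = (t - s) * x + s"
  define y' where "y' = (t - s) * y + s"
  have "(t - s) * x \<le> t - s" "(t - s) * y \<le> t - s" "0 \<le> (t - s) * x" "0 \<le> (t - s) * y"
    using assms(3,6,7) by (auto intro: mult_left_le)
  then have "0 \<le> x'" "x' \<le> 1" "0 \<le> y'" "y' \<le> 1"
    using assms(2-4) unfolding x'_def y'_def by linarith+
  then have range: "x' \<in> {0..1}" "y' \<in> {0..1}"
    by simp_all
  have scaled: "x' - y' = (t - s) * (x - y)"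
    by (simp add: x'_def y'_def algebra_simps)
  have "g x' - g y' = of_int m * c"
    using chord by (simp add: subpath_def x'_def y'_def)
  show ?thesis
  proof (cases "m = 0")
    case True
    then have "x' = y'"
      using \<open>g x' - g y' = of_int m * c\<close> \<open>inj_on g {0..1}\<close> range by (simp add: inj_on_def)
    then show ?thesis
      using scaled \<open>s < t\<close> by simp
  next
    case False
    have "g y' - g x' = of_int (- m) * c"
      using \<open>g x' - g y' = of_int m * c\<close> by (simp add: algebra_simps)
    then have "t - s \<le> \<bar>x' - y'\<bar>"
      using shortest[of x' y' "- m"] shortest[of y' x' m] \<open>g x' - g y' = of_int m * c\<close> range False
      by (cases "x' \<le> y'") auto
    also have "\<dots> = (t - s) * \<bar>x - y\<bar>"
      using scaled \<open>s < t\<close> by (simp add: abs_mult)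
    finally have "1 \<le> \<bar>x - y\<bar>"
      using \<open>s < t\<close> by simp
    then show ?thesis
      using assms(6,7) by auto
  qed
qed

lemma arc_has_chord_dividing_displacement:
  fixes g :: "real \<Rightarrow> complex" and c :: complex and k :: nat
  assumes "arc g" "c \<noteq> 0" "k \<ge> 1"
    and displacement: "pathfinish g - pathstart g = of_nat k * c"
  shows "\<exists>x\<in>path_image g. \<exists>y\<in>path_image g. y - x = c"
proof -
  define L where "L = {of_int j * c | j::int. j \<noteq> 0}"
  have "path g"
    using \<open>arc g\<close> by (rule arc_imp_path)
  then have "continuous_on {0..1} g"
    by (simp add: path_def)
  moreover have "closed L"
    unfolding L_def using \<open>c \<noteq> 0\<close> by (rule closed_nonzero_int_multiples)
  moreover have "g 1 - g 0 \<in> L"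
    using displacement \<open>k \<ge> 1\<close> unfolding L_def pathfinish_def pathstart_def
    by (intro CollectI exI[of _ "int k"]) simp
  ultimately obtain s t where st: "0 \<le> s" "s \<le> t" "t \<le> 1" and "g t - g s \<in> L"
    and shortest: "\<And>a b. 0 \<le> a \<Longrightarrow> a \<le> b \<Longrightarrow> b \<le> 1 \<Longrightarrow> g b - g a \<in> L \<Longrightarrow> t - s \<le> b - a"
    using shortest_interval_with_increment_in by blast
  then obtain j :: int where "j \<noteq> 0" and increment: "g t - g s = of_int j * c"
    unfolding L_def by blast
  then have "s < t"
    using \<open>s \<le> t\<close> \<open>c \<noteq> 0\<close> by (cases "s = t") auto
  have "path (subpath s t g)"
    using st \<open>path g\<close> by (intro path_subpath) auto
  moreover have "subpath s t g 1 - subpath s t g 0 = of_int j * c"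
    using increment by (simp add: subpath_def)
  moreover have "inj_on g {0..1}"
    using \<open>arc g\<close> by (simp add: arc_def)
  ultimately have "j \<in> {-1, 0, 1}"
    using winding_number_bound_for_lattice_injective_path[OF _ \<open>c \<noteq> 0\<close>]
      subpath_injective_modulo_multiples_of_shortest[of g s t c] st \<open>s < t\<close> shortest
    unfolding L_def by blast
  then have "g t - g s = c \<or> g s - g t = c"
    using increment \<open>j \<noteq> 0\<close> by (auto simp: algebra_simps)
  moreover have "g s \<in> path_image g" "g t \<in> path_image g"
    using st by (auto simp: path_image_def)
  ultimately show ?thesis
    by blast
qed

lemma gaussian_int_unit_step:
  assumes "gaussian_int z" "gaussian_int w" "cmod (w - z) = 1"
  shows "w - z \<in> {1, -1, \<i>, -\<i>}"
proof -
  obtain p q :: int where pq: "Re (w - z) = of_int p" "Im (w - z) = of_int q"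
    using assms(1,2) unfolding gaussian_int_def
    by (metis Ints_cases Ints_diff minus_complex.simps)
  have "real_of_int (p\<^sup>2 + q\<^sup>2) = 1"
    using assms(3) pq unfolding cmod_def by simp
  then have sum: "p\<^sup>2 + q\<^sup>2 = 1"
    by (simp only: of_int_eq_1_iff)
  then have "p\<^sup>2 \<le> 1" "q\<^sup>2 \<le> 1"
    using zero_le_power2[of p] zero_le_power2[of q] by linarith+
  then have "\<bar>p\<bar> \<le> 1" "\<bar>q\<bar> \<le> 1"
    by (simp_all only: abs_square_le_1)
  then have "p \<in> {-1, 0, 1}" "q \<in> {-1, 0, 1}"
    by auto
  with sum have "(p, q) \<in> {(1, 0), (-1, 0), (0, 1), (0, -1)}"
    by auto
  then show ?thesis
    using pq by (auto simp: complex_eq_iff)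
qed

fun walk_trace :: "complex list \<Rightarrow> complex set" where
  "walk_trace (a # b # zs) = closed_segment a b \<union> walk_trace (b # zs)"
| "walk_trace _ = {}"

lemma set_subset_walk_trace:
  "Suc 0 < length zs \<Longrightarrow> set zs \<subseteq> walk_trace zs"
proof (induction zs rule: walk_trace.induct)
  case (1 a b zs)
  then show ?case
    by (cases zs) auto
qed simp_all

lemma path_connected_walk_trace: "path_connected (walk_trace zs)"
proof (induction zs rule: walk_trace.induct)
  case (1 a b zs)
  show ?case
  proof (cases zs)
    case Nil
    then show ?thesis by simp
  next
    case (Cons c cs)
    then have "b \<in> walk_trace (b # zs)"
      using set_subset_walk_trace[of "b # zs"] by auto
    then show ?thesis
      using 1 by (auto intro: path_connected_Un)
  qed
qed simp_all

lemma walk_trace_edge: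
  "x \<in> walk_trace zs \<Longrightarrow> \<exists>j. Suc j < length zs \<and> x \<in> closed_segment (zs ! j) (zs ! Suc j)"
proof (induction zs rule: walk_trace.induct)
  case (1 a b zs)
  show ?case
  proof (cases "x \<in> closed_segment a b")
    case True
    then show ?thesis
      by (intro exI[of _ 0]) simp
  next
    case False
    then obtain j where "Suc j < length (b # zs)" "x \<in> closed_segment ((b # zs) ! j) ((b # zs) ! Suc j)"
      using 1 by auto
    then show ?thesis
      by (intro exI[of _ "Suc j"]) simp
  qed
qed simp_all

lemma floor_ceiling_add_unit_interval:
  fixes u :: real
  assumes "0 \<le> u" "u \<le> 1"
  shows "\<lfloor>of_int x + u\<rfloor> \<in> {x, x + 1}" "\<lceil>of_int x + u\<rceil> \<in> {x, x + 1}"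
  using assms by (auto simp: floor_eq_iff ceiling_eq_iff)

lemma positive_unit_edge_rounding:
  assumes "gaussian_int z" "z' - z \<in> {1, \<i>}" "a \<in> closed_segment z z'"
    and k: "k \<in> {\<lfloor>Re a\<rfloor>, \<lceil>Re a\<rceil>}"
  shows "\<exists>X\<in>{z, z'}. Re X = of_int k \<and> Im X = of_int \<lfloor>Im a\<rfloor>"
proof -
  obtain x y :: int where z: "Re z = of_int x" "Im z = of_int y"
    using assms(1) unfolding gaussian_int_def by (auto elim!: Ints_cases)
  obtain u where u: "0 \<le> u" "u \<le> 1" and a: "a = z + u *\<^sub>R (z' - z)"
    using assms(3) by (auto simp: in_segment algebra_simps)
  from assms(2) consider "z' = z + 1" | "z' = z + \<i>"
    by (auto simp: diff_eq_eq)
  then show ?thesis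
  proof cases
    case 1
    then have "Re a = of_int x + u" "Im a = of_int y"
      using a z by simp_all
    then show ?thesis
      using k z 1 floor_ceiling_add_unit_interval[OF u, of x] by auto
  next
    case 2
    then have "Re a = of_int x" "Im a = of_int y + u"
      using a z by simp_all
    then show ?thesis
      using k z 2 floor_ceiling_add_unit_interval[OF u, of y] by auto
  qed
qed

lemma unit_edge_rounding:
  assumes "gaussian_int z" "gaussian_int z'" "cmod (z' - z) = 1" "a \<in> closed_segment z z'"
    and "k \<in> {\<lfloor>Re a\<rfloor>, \<lceil>Re a\<rceil>}"
  shows "\<exists>X\<in>{z, z'}. Re X = of_int k \<and> Im X = of_int \<lfloor>Im a\<rfloor>"
proof -
  have "z' - z \<in> {1, -1, \<i>, -\<i>}"
    using gaussian_int_unit_step assms(1-3) .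
  then have "z' - z \<in> {1, \<i>} \<or> z - z' \<in> {1, \<i>}"
    by (elim insertE) (simp_all add: algebra_simps)
  then show ?thesis
  proof
    assume "z' - z \<in> {1, \<i>}"
    then show ?thesis
      using positive_unit_edge_rounding assms(1,4,5) by blast
  next
    assume "z - z' \<in> {1, \<i>}"
    moreover have "a \<in> closed_segment z' z"
      using assms(4) by (simp add: closed_segment_commute)
    ultimately have "\<exists>X\<in>{z', z}. Re X = of_int k \<and> Im X = of_int \<lfloor>Im a\<rfloor>"
      using positive_unit_edge_rounding assms(2,5) by blast
    then show ?thesis
      by (simp add: insert_commute)
  qed
qed

lemma rounding_with_integer_difference:
  fixes a b :: real and d :: int
  assumes "\<bar>b - a - of_int d\<bar> < 1"
  shows "\<exists>x\<in>{\<lfloor>a\<rfloor>, \<lceil>a\<rceil>}. \<exists>y\<in>{\<lfloor>b\<rfloor>, \<lceil>b\<rceil>}. y - x = d"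
proof -
  define m where "m = \<lfloor>b\<rfloor> - \<lfloor>a\<rfloor>"
  have "of_int \<lfloor>a\<rfloor> \<le> a" "a < of_int \<lfloor>a\<rfloor> + 1" "of_int \<lfloor>b\<rfloor> \<le> b" "b < of_int \<lfloor>b\<rfloor> + 1"
    by linarith+
  then have "real_of_int m < of_int d + 2" "real_of_int m > of_int d - 2"
    using assms unfolding m_def by linarith+
  then consider "m = d" | "m = d - 1" | "m = d + 1"
    by linarith
  then show ?thesis
  proof cases
    case 1
    then show ?thesis
      unfolding m_def by force
  next
    case 2
    then have "\<lceil>b\<rceil> = \<lfloor>b\<rfloor> + 1"
      using assms unfolding m_def by (intro ceiling_unique) linarith+
    then show ?thesis
      using 2 unfolding m_def by force
  next
    case 3
    then have "\<lceil>a\<rceil> = \<lfloor>a\<rfloor> + 1"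
      using assms unfolding m_def by (intro ceiling_unique) linarith+
    then show ?thesis
      using 3 unfolding m_def by force
  qed
qed

lemma unit_edges_endpoints_at_integer_distance:
  fixes d :: int
  assumes "gaussian_int z" "gaussian_int z'" "cmod (z' - z) = 1" "a \<in> closed_segment z z'"
    and "gaussian_int w" "gaussian_int w'" "cmod (w' - w) = 1" "b \<in> closed_segment w w'"
    and "Im a = Im b" "\<bar>Re b - Re a - of_int d\<bar> < 1"
  shows "\<exists>X\<in>{z, z'}. \<exists>Y\<in>{w, w'}. Y - X = of_int d"
proof -
  obtain x y where x: "x \<in> {\<lfloor>Re a\<rfloor>, \<lceil>Re a\<rceil>}" and y: "y \<in> {\<lfloor>Re b\<rfloor>, \<lceil>Re b\<rceil>}"
    and "y - x = d"
    using rounding_with_integer_difference assms(10) by blast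
  obtain X where X: "X \<in> {z, z'}" "Re X = of_int x" "Im X = of_int \<lfloor>Im a\<rfloor>"
    using unit_edge_rounding[OF assms(1-4) x] by blast
  obtain Y where Y: "Y \<in> {w, w'}" "Re Y = of_int y" "Im Y = of_int \<lfloor>Im b\<rfloor>"
    using unit_edge_rounding[OF assms(5-8) y] by blast
  have "Y - X = of_int d"
    using X(2,3) Y(2,3) \<open>y - x = d\<close> assms(9) by (simp add: complex_eq_iff flip: of_int_diff)
  then show ?thesis
    using X(1) Y(1) by blast
qed

lemma exists_quotient_near:
  fixes n d :: nat
  assumes "0 < d" "d * d \<le> 2 * n"
  shows "\<exists>k::nat. k \<ge> 1 \<and> \<bar>real n / real k - real d\<bar> < 1"
proof -
  define q where "q = n div (d + 1)"
  define r where "r = n mod (d + 1)"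
  have "n = q * (d + 1) + r"
    unfolding q_def r_def by (metis div_mult_mod_eq)
  then have n: "int n = int q * (int d + 1) + int r"
    by (simp add: algebra_simps)
  have "r \<le> d"
    unfolding r_def using mod_less_divisor[of "d + 1" n] by simp
  then have upper: "int n < (int q + 1) * (int d + 1)"
    using n by (simp add: algebra_simps)
  have lower: "(int q + 1) * (int d - 1) < int n"
  proof (rule ccontr)
    assume "\<not> ?thesis"
    then have "2 * int q + int r + 1 \<le> int d"
      using n by (simp add: algebra_simps)
    then have "2 * int q * (int d + 1) \<le> (int d - int r - 1) * (int d + 1)"
      by (intro mult_right_mono) auto
    moreover have "int r \<le> int r * int d"
      using assms(1) by (simp add: mult_le_cancel_left1)
    moreover have "int d * int d \<le> 2 * int n"
      using assms(2) by (metis of_nat_le_iff of_nat_mult of_nat_numeral)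
    ultimately show False
      using n by (simp add: algebra_simps)
  qed
  define k where "k = q + 1"
  have "real_of_int ((int q + 1) * (int d - 1)) < real_of_int (int n)"
    "real_of_int (int n) < real_of_int ((int q + 1) * (int d + 1))"
    using lower upper by (simp_all only: of_int_less_iff)
  then have "real k * (real d - 1) < real n" "real n < real k * (real d + 1)"
    unfolding k_def by (simp_all add: add.commute)
  then have "\<bar>real n / real k - real d\<bar> < 1"
    unfolding k_def by (simp add: abs_less_iff field_simps)
  then show ?thesis
    unfolding k_def by auto
qed

lemma walk_trace_chord_near_integer:
  fixes d :: int
  assumes walk: "is_walk zs" and "a \<in> walk_trace zs" "b \<in> walk_trace zs"
    and "Im a = Im b" "\<bar>Re b - Re a - of_int d\<bar> < 1"
  shows "\<exists>t<length zs. \<exists>u<length zs. zs ! t - zs ! u = of_int d"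
proof -
  have vertex: "gaussian_int (zs ! j)" if "j < length zs" for j
    using walk that unfolding is_walk_def by auto
  have edge: "cmod (zs ! Suc j - zs ! j) = 1" if "Suc j < length zs" for j
    using walk that unfolding is_walk_def by blast
  obtain j1 j2 where j: "Suc j1 < length zs" "Suc j2 < length zs"
    and a: "a \<in> closed_segment (zs ! j1) (zs ! Suc j1)" and b: "b \<in> closed_segment (zs ! j2) (zs ! Suc j2)"
    using walk_trace_edge assms(2,3) by metis
  have "\<exists>X\<in>{zs ! j1, zs ! Suc j1}. \<exists>Y\<in>{zs ! j2, zs ! Suc j2}. Y - X = of_int d"
    using j assms(4,5)
    by (intro unit_edges_endpoints_at_integer_distance[OF _ _ _ a _ _ _ b]) (auto intro: vertex edge)
  then show ?thesis
    using j by (metis Suc_lessD insert_iff singletonD)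
qed

lemma walk_realises_difference:
  fixes n d :: nat
  assumes walk: "is_walk zs" and "r < length zs" "s < length zs"
    and displacement: "zs ! r - zs ! s = of_nat n" and "0 < d" "d * d \<le> 2 * n"
  shows "\<exists>t<length zs. \<exists>u<length zs. zs ! t - zs ! u = of_nat d"
proof -
  have "0 < n"
    using \<open>0 < d\<close> \<open>d * d \<le> 2 * n\<close> by (metis mult_pos_pos not_gr0 le_zero_eq mult_0_right)
  then have "zs ! r \<noteq> zs ! s"
    using displacement by auto
  then have "Suc 0 < length zs"
    using \<open>r < length zs\<close> \<open>s < length zs\<close> by (cases "r = s") auto
  then have "zs ! s \<in> walk_trace zs" "zs ! r \<in> walk_trace zs"
    using set_subset_walk_trace \<open>r < length zs\<close> \<open>s < length zs\<close> nth_mem by blast+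
  then obtain g where g: "arc g" "path_image g \<subseteq> walk_trace zs"
    "pathstart g = zs ! s" "pathfinish g = zs ! r"
    using path_connected_walk_trace \<open>zs ! r \<noteq> zs ! s\<close> unfolding path_connected_arcwise by metis
  obtain k :: nat where "k \<ge> 1" and k: "\<bar>real n / real k - real d\<bar> < 1"
    using exists_quotient_near \<open>0 < d\<close> \<open>d * d \<le> 2 * n\<close> by blast
  define c where "c = real n / real k"
  have "pathfinish g - pathstart g = of_nat k * complex_of_real c"
    using g displacement \<open>k \<ge> 1\<close> unfolding c_def by (simp add: field_simps)
  moreover have "complex_of_real c \<noteq> 0"
    using \<open>0 < n\<close> \<open>k \<ge> 1\<close> unfolding c_def by simp
  ultimately obtain a b where "a \<in> walk_trace zs" "b \<in> walk_trace zs" and chord: "b - a = of_real c"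
    using arc_has_chord_dividing_displacement[OF g(1) _ \<open>k \<ge> 1\<close>] g(2) by blast
  moreover have "Im a = Im b" "\<bar>Re b - Re a - of_int (int d)\<bar> < 1"
    using chord k unfolding c_def by (auto simp: complex_eq_iff)
  ultimately show ?thesis
    using walk_trace_chord_near_integer[OF walk] by (metis of_int_of_nat_eq)
qed

theorem mainTheorem4:
  fixes n d :: nat
  assumes "0 < n" and "0 < d" and "real n \<ge> (real d)^2 / 2"
  shows "d \<in> A n"
proof -
  have "d * d \<le> 2 * n"
    using assms(3) by (simp add: power2_eq_square flip: of_nat_mult of_nat_le_iff)
  then have "\<not> avoidable n d"
    using walk_realises_difference \<open>0 < d\<close> unfolding avoidable_def by metis
  then show ?thesis
    using \<open>0 < d\<close> by (simp add: A_def)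
qed

end
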